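(* Let $M$ be a finite-dimensional quantum system with $\dim\mathcal H_M\ge 2$, let $P$ be a qubit with basis $\{|0\rangle,|1\rangle\}$, and let $|\psi_0\rangle\in\mathcal H_M$ be a unit vector. Let $\mathcal E_0(\cdot)=|\psi_0\rangle\langle\psi_0|\operatorname{Tr}[\cdot]$ be the pure erasure channel on $M$ and $\mathcal C=\mathcal E_0\otimes\mathcal I_P$, where $\mathcal I_P$ is the identity channel on $P$. Let $A$ and $B$ be copies of $M$, $\widetilde A=A\oplus\mathrm{Vac}$, $\widetilde B=B\oplus\mathrm{Vac}$, where $\mathrm{Vac}$ is a one-dimensional sector spanned by $|\mathrm{vac}\rangle$, and let $U:\mathcal H_M\otimes\mathcal H_P\to(\mathcal H_A\otimes\mathcal H_{\mathrm{Vac}})\oplus(\mathcal H_{\mathrm{Vac}}\otimes\mathcal H_B)\subseteq\mathcal H_{\widetilde A}\otimes\mathcal H_{\widetilde B}$ be the unitary defined by $U(|\psi\rangle\otimes|0\rangle)=|\psi\rangle\otimes|\mathrm{vac}\rangle$ and $U(|\psi\rangle\otimes|1\rangle)=|\mathrm{vac}\rangle\otimes|\psi\rangle$, with $\mathcal U(\cdot)=U\cdot U^\dagger$. Then there do not exist finite-dimensional systems $E$ and $F$, a state $\sigma_{EF}$ of $EF$, and unitaries $\widetilde V_{AE}=V_{AE}\oplus(|\mathrm{vac}\rangle\langle\mathrm{vac}|\otimes I_E)$ on $\mathcal H_{\widetilde A}\otimes\mathcal H_E$ and $\widetilde W_{BF}=W_{BF}\oplus(|\mathrm{vac}\rangle\langle\mathrm{vac}|\otimes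 I_F)$ on $\mathcal H_{\widetilde B}\otimes\mathcal H_F$ (with $V_{AE}$ unitary on $\mathcal H_A\otimes\mathcal H_E$ and $W_{BF}$ unitary on $\mathcal H_B\otimes\mathcal H_F$), such that for all states $\rho$ of $M$ and $\omega$ of $P$ $$\mathcal C(\rho\otimes\omega)=\mathcal U^\dagger\Big(\operatorname{Tr}_{EF}\big\{(\widetilde{\mathcal V}_{AE}\otimes\widetilde{\mathcal W}_{BF})[\mathcal U(\rho\otimes\omega)\otimes\sigma_{EF}]\big\}\Big),$$ where $\widetilde{\mathcal V}_{AE}(\cdot)=\widetilde V_{AE}\cdot\widetilde V_{AE}^\dagger$, $\widetilde{\mathcal W}_{BF}(\cdot)=\widetilde W_{BF}\cdot\widetilde W_{BF}^\dagger$ and $\mathcal U^\dagger(\cdot)=U^\dagger\cdot U$.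
   Context: $\widetilde{\mathcal V}_{AE}$ and $\widetilde{\mathcal W}_{BF}$ model the interaction of a particle with local environments $E$ and $F$ on two spatially separated paths; they act as the identity when the particle's input on that path is the vacuum. The tensor product $\widetilde{\mathcal V}_{AE}\otimes\widetilde{\mathcal W}_{BF}$ acts on $\widetilde A\otimes\widetilde B\otimes E\otimes F$ with subsystems reordered as appropriate. *)

theory Defs
  imports Complex_Main "Jordan_Normal_Form.Matrix"
begin

text \<open>Computational basis index conventions: the tensor product
H_1 (x) H_2 of dimensions n1, n2 has basis index i*n2+j for |i>|j> (Kronecker order).\<close>

definition cinner :: "complex vec \<Rightarrow> complex vec \<Rightarrow> complex" where
  "cinner v w = (\<Sum>i<dim_vec v. cnj (v $ i) * w $ i)"

definition adj :: "complex mat \<Rightarrow> complex mat" where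
  "adj A = mat (dim_col A) (dim_row A) (\<lambda>(i,j). cnj (A $$ (j,i)))"

definition tr :: "complex mat \<Rightarrow> complex" where
  "tr A = (\<Sum>i<dim_row A. A $$ (i,i))"

definition kron :: "complex mat \<Rightarrow> complex mat \<Rightarrow> complex mat" where
  "kron A B = mat (dim_row A * dim_row B) (dim_col A * dim_col B)
     (\<lambda>(i,j). A $$ (i div dim_row B, j div dim_col B) * B $$ (i mod dim_row B, j mod dim_col B))"

definition ptrace2 :: "nat \<Rightarrow> nat \<Rightarrow> complex mat \<Rightarrow> complex mat" where
  "ptrace2 n1 n2 X = mat n1 n1 (\<lambda>(i,j). \<Sum>k<n2. X $$ (i*n2+k, j*n2+k))"

definition ptrace1 :: "nat \<Rightarrow> nat \<Rightarrow> complex mat \<Rightarrow> complex mat" where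
  "ptrace1 n1 n2 X = mat n2 n2 (\<lambda>(i,j). \<Sum>k<n1. X $$ (k*n2+i, k*n2+j))"

definition positive_semidef :: "nat \<Rightarrow> complex mat \<Rightarrow> bool" where
  "positive_semidef n A \<longleftrightarrow> A \<in> carrier_mat n n \<and>
     (\<forall>v \<in> carrier_vec n. Im (cinner v (A *\<^sub>v v)) = 0 \<and> Re (cinner v (A *\<^sub>v v)) \<ge> 0)"

definition density :: "nat \<Rightarrow> complex mat \<Rightarrow> bool" where
  "density n \<rho> \<longleftrightarrow> positive_semidef n \<rho> \<and> tr \<rho> = 1"

definition unitary_mat :: "nat \<Rightarrow> complex mat \<Rightarrow> bool" where
  "unitary_mat n V \<longleftrightarrow> V \<in> carrier_mat n n \<and> adj V * V = 1\<^sub>m n \<and> V * adj V = 1\<^sub>m n"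

text \<open>Pure erasure channel on M (dim d): E_0(X) = |psi0><psi0| Tr X, and
C = E_0 (x) I_P on M (x) P with P a qubit.\<close>
definition ketbra :: "complex vec \<Rightarrow> complex mat" where
  "ketbra v = mat (dim_vec v) (dim_vec v) (\<lambda>(i,j). v $ i * cnj (v $ j))"

definition chanC :: "nat \<Rightarrow> complex vec \<Rightarrow> complex mat \<Rightarrow> complex mat" where
  "chanC d \<psi>0 X = kron (ketbra \<psi>0) (ptrace1 d 2 X)"

text \<open>Vacuum-extended system A~ = A (+) Vac of dimension d+1: indices 0..d-1 are the
A basis, index d is |vac>.  The isometry U : M (x) P -> A~ (x) B~ with
U(|j>|0>) = |j>|vac>,  U(|j>|1>) = |vac>|j>.\<close>
definition Umat :: "nat \<Rightarrow> complex mat" where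
  "Umat d = mat ((d+1)*(d+1)) (d*2) (\<lambda>(r,c).
     if (c mod 2 = 0 \<and> r = (c div 2)*(d+1) + d) \<or> (c mod 2 = 1 \<and> r = d*(d+1) + c div 2)
     then 1 else 0)"

text \<open>V~ = V (+) (|vac><vac| (x) I_E) on A~ (x) E, where A~ (x) E = (A (x) E) (+) (Vac (x) E):
with index order i*e+k the A (x) E block comes first (d*e indices) and Vac (x) E last (e indices).\<close>
definition vac_ext :: "nat \<Rightarrow> nat \<Rightarrow> complex mat \<Rightarrow> complex mat" where
  "vac_ext d e V = four_block_mat V (0\<^sub>m (d*e) e) (0\<^sub>m e (d*e)) (1\<^sub>m e)"

text \<open>Permutation matrix reordering subsystems  X1 X2 X3 X4  ->  X1 X3 X2 X4
(dims n1 n2 n3 n4): maps |i,j,k,l> to |i,k,j,l>.\<close>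
definition swap_mid :: "nat \<Rightarrow> nat \<Rightarrow> nat \<Rightarrow> nat \<Rightarrow> complex mat" where
  "swap_mid n1 n2 n3 n4 = mat (n1*n2*n3*n4) (n1*n2*n3*n4) (\<lambda>(r,c).
     let i = c div (n2*n3*n4); j = (c div (n3*n4)) mod n2; k = (c div n4) mod n3; l = c mod n4
     in if r = ((i*n3 + k)*n2 + j)*n4 + l then 1 else 0)"

text \<open>(V~_AE (x) W~_BF) acting on A~ B~ E F (subsystems reordered appropriately).\<close>
definition VW_op :: "nat \<Rightarrow> nat \<Rightarrow> nat \<Rightarrow> complex mat \<Rightarrow> complex mat \<Rightarrow> complex mat" where
  "VW_op d e f V W = (let S = swap_mid (d+1) (d+1) e f in
      adj S * kron (vac_ext d e V) (vac_ext d f W) * S)"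

end

theory Submission
  imports Defs
begin

text \<open>Feed the product state |a><a| (x) |+><+| into both sides and compare the entry at
(|i,0>, |j,1>), which records the coherence between the branches |a>|vac> and |vac>|a>. The
erasure channel keeps it: the entry is psi0_i conj(psi0_j) / 2. In the local model the vacuum
blocks of V~ and W~ act as the identity, so the entry is half of branch_coherence a i j, and
contracting with conj(psi0_i) psi0_j turns the identity into
sum_(k,l) <F_(a,k,l)| sigma |E_(a,k,l)> = 1 for every a < d. Here E_(a,k,l) = X_a|k> (x) |l> and
F_(a,k,l) = |k> (x) Y_a|l>, with X_a = (<psi0| (x) I_E) V (|a> (x) I_E) and Y_a the analogous
block of W. Unitarity of V and W makes both families Parseval frames of C^e (x) C^f, so
2 Re <F|sigma|E> <= <E|sigma|E> + <F|sigma|F> bounds the total over all (a,k,l) by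
tr sigma = 1, whereas it equals d >= 2.\<close>

section \<open>Entries of products, adjoints and Kronecker products\<close>

lemma index_mult_mat_sum:
  assumes "i < dim_row A" "j < dim_col B" "dim_col A = dim_row B"
  shows "(A * B) $$ (i,j) = (\<Sum>k<dim_row B. A $$ (i,k) * B $$ (k,j))"
  using assms by (auto simp: scalar_prod_def lessThan_atLeast0 intro!: sum.cong)

lemma index_adj [simp]: "i < dim_col A \<Longrightarrow> j < dim_row A \<Longrightarrow> adj A $$ (i,j) = cnj (A $$ (j,i))"
  and dim_row_adj [simp]: "dim_row (adj A) = dim_col A"
  and dim_col_adj [simp]: "dim_col (adj A) = dim_row A"
  by (auto simp: adj_def)

lemma adj_carrier_mat: "A \<in> carrier_mat n m \<Longrightarrow> adj A \<in> carrier_mat m n"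
  by auto

lemma adj_adj [simp]: "adj (adj A) = A"
  by (rule eq_matI) auto

lemma index_kron:
  "i < dim_row A * dim_row B \<Longrightarrow> j < dim_col A * dim_col B \<Longrightarrow>
   kron A B $$ (i,j) = A $$ (i div dim_row B, j div dim_col B) * B $$ (i mod dim_row B, j mod dim_col B)"
  and dim_row_kron [simp]: "dim_row (kron A B) = dim_row A * dim_row B"
  and dim_col_kron [simp]: "dim_col (kron A B) = dim_col A * dim_col B"
  by (auto simp: kron_def)

lemma kron_carrier_mat:
  "A \<in> carrier_mat n1 m1 \<Longrightarrow> B \<in> carrier_mat n2 m2 \<Longrightarrow> kron A B \<in> carrier_mat (n1*n2) (m1*m2)"
  by auto

lemma pair_index_less: "i < m \<Longrightarrow> j < n \<Longrightarrow> i*n + j < m*(n::nat)"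
  using mult_le_mono1[of "Suc i" m n] by simp

lemma pair_index_eq_iff:
  assumes "j < n" "j' < n"
  shows "i*n + j = i'*n + j' \<longleftrightarrow> i = i' \<and> j = (j'::nat)"
proof
  assume "i*n + j = i'*n + j'"
  then have "(i*n + j) div n = (i'*n + j') div n" "(i*n + j) mod n = (i'*n + j') mod n"
    by simp_all
  with assms show "i = i' \<and> j = j'" by simp
qed simp

lemma pair_index_div: "j < n \<Longrightarrow> (i*n + j) div n = (i::nat)"
  by simp

lemma index_kron_pair:
  assumes "A \<in> carrier_mat n1 m1" "B \<in> carrier_mat n2 m2"
    and "i < n1" "i' < m1" "j < n2" "j' < m2"
  shows "kron A B $$ (i*n2 + j, i'*m2 + j') = A $$ (i,i') * B $$ (j,j')"
  using assms pair_index_less[of i n1 j n2] pair_index_less[of i' m1 j' m2] by (simp add: index_kron)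

lemma sum_lessThan_mult:
  fixes g :: "nat \<Rightarrow> 'a::comm_monoid_add"
  shows "(\<Sum>p<m*n. g p) = (\<Sum>i<m. \<Sum>j<n. g (i*n + j))"
proof (induction m)
  case (Suc m)
  have "{..<Suc m * n} = {..<m*n} \<union> {m*n..<m*n + n}" by auto
  then have "(\<Sum>p<Suc m * n. g p) = (\<Sum>p<m*n. g p) + (\<Sum>p\<in>{m*n..<m*n + n}. g p)"
    by (simp add: sum.union_disjoint ivl_disj_int)
  also have "(\<Sum>p\<in>{m*n..<m*n + n}. g p) = (\<Sum>j<n. g (m*n + j))"
    using sum.shift_bounds_nat_ivl[of g 0 "m*n" n] by (simp add: add.commute atLeast0LessThan)
  finally show ?case using Suc by simp
qed simp

lemma sum_product_triple:
  "(\<Sum>x\<in>A \<times> B \<times> C. g x) = (\<Sum>a\<in>A. \<Sum>b\<in>B. \<Sum>c\<in>C. g (a,b,c))"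
  by (simp add: sum.cartesian_product)

lemma sum_if_zero: "(\<Sum>x\<in>A. if P then g x else 0) = (if P then sum g A else 0)"
  by simp

lemma index_mult_mult_adj:
  assumes T: "T \<in> carrier_mat m n" and M: "M \<in> carrier_mat n n" and "x < m" "y < m"
  shows "(T * M * adj T) $$ (x,y) = (\<Sum>p<n. T $$ (x,p) * (\<Sum>q<n. M $$ (p,q) * cnj (T $$ (y,q))))"
proof -
  have "(T * M * adj T) $$ (x,y) = (\<Sum>q<n. (T * M) $$ (x,q) * cnj (T $$ (y,q)))"
    using assms by (subst index_mult_mat_sum) auto
  also have "\<dots> = (\<Sum>q<n. (\<Sum>p<n. T $$ (x,p) * M $$ (p,q)) * cnj (T $$ (y,q)))"
    using assms by (intro sum.cong refl, subst index_mult_mat_sum) auto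
  also have "\<dots> = (\<Sum>q<n. \<Sum>p<n. T $$ (x,p) * (M $$ (p,q) * cnj (T $$ (y,q))))"
    by (simp add: sum_distrib_right mult.assoc)
  also have "\<dots> = (\<Sum>p<n. T $$ (x,p) * (\<Sum>q<n. M $$ (p,q) * cnj (T $$ (y,q))))"
    by (subst sum.swap) (simp add: sum_distrib_left)
  finally show ?thesis .
qed

lemma index_perm_conjugate:
  assumes S: "S \<in> carrier_mat n m" and Z: "Z \<in> carrier_mat n n"
    and \<pi>: "\<And>c. c < m \<Longrightarrow> \<pi> c < n"
    and S_entry: "\<And>r c. r < n \<Longrightarrow> c < m \<Longrightarrow> S $$ (r,c) = (if r = \<pi> c then 1 else 0)"
    and "x < m" "y < m"
  shows "(adj S * Z * S) $$ (x,y) = Z $$ (\<pi> x, \<pi> y)"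
proof -
  have "(adj S * Z * adj (adj S)) $$ (x,y)
      = (\<Sum>p<n. cnj (S $$ (p,x)) * (\<Sum>q<n. Z $$ (p,q) * S $$ (q,y)))"
    using assms by (subst index_mult_mult_adj[of _ m n]) auto
  also have "\<dots> = Z $$ (\<pi> x, \<pi> y)"
    using assms by (simp add: S_entry if_distrib[of cnj] if_distrib[of "\<lambda>u. u * _"]
        if_distrib[of "\<lambda>u. _ * u"] cong: if_cong)
  finally show ?thesis by simp
qed

lemma index_embedding_conjugate:
  assumes S: "S \<in> carrier_mat n m" and Z: "Z \<in> carrier_mat m m"
    and \<pi>: "\<And>c. c < m \<Longrightarrow> \<pi> c < n" and inj: "inj_on \<pi> {..<m}"
    and S_entry: "\<And>r c. r < n \<Longrightarrow> c < m \<Longrightarrow> S $$ (r,c) = (if r = \<pi> c then 1 else 0)"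
    and "x < m" "y < m"
  shows "(S * Z * adj S) $$ (\<pi> x, \<pi> y) = Z $$ (x,y)"
proof -
  have row: "S $$ (\<pi> z, p) = (if p = z then 1 else 0)" if "z < m" "p < m" for z p
    using that \<pi> S_entry inj_on_eq_iff[OF inj] by auto
  have "(S * Z * adj S) $$ (\<pi> x, \<pi> y)
      = (\<Sum>p<m. S $$ (\<pi> x, p) * (\<Sum>q<m. Z $$ (p,q) * cnj (S $$ (\<pi> y, q))))"
    using assms by (intro index_mult_mult_adj) auto
  also have "\<dots> = Z $$ (x,y)"
    using \<open>x < m\<close> \<open>y < m\<close> by (simp add: row if_distrib[of cnj] if_distrib[of "\<lambda>u. u * _"]
        if_distrib[of "\<lambda>u. _ * u"] cong: if_cong)
  finally show ?thesis .
qed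

definition kron_index4 :: "nat \<Rightarrow> nat \<Rightarrow> nat \<Rightarrow> nat \<Rightarrow> nat \<Rightarrow> nat \<Rightarrow> nat \<Rightarrow> nat" where
  "kron_index4 n2 n3 n4 i j k l = ((i*n2 + j)*n3 + k)*n4 + l"

lemma kron_index4_less:
  "i < n1 \<Longrightarrow> j < n2 \<Longrightarrow> k < n3 \<Longrightarrow> l < n4 \<Longrightarrow> kron_index4 n2 n3 n4 i j k l < n1*n2*n3*n4"
  unfolding kron_index4_def by (intro pair_index_less)

lemma kron_index4_split: "kron_index4 n2 n3 n4 i j k l = (i*n2 + j)*(n3*n4) + (k*n4 + l)"
  by (simp add: kron_index4_def algebra_simps)

lemma sum_kron_index4:
  "(\<Sum>p<n1*n2*n3*n4. g p) = (\<Sum>i<n1. \<Sum>j<n2. \<Sum>k<n3. \<Sum>l<n4. g (kron_index4 n2 n3 n4 i j k l))"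
  by (simp only: sum_lessThan_mult kron_index4_def)

definition swap_mid_index :: "nat \<Rightarrow> nat \<Rightarrow> nat \<Rightarrow> nat \<Rightarrow> nat" where
  "swap_mid_index n2 n3 n4 c =
     kron_index4 n3 n2 n4 (c div (n2*n3*n4)) ((c div n4) mod n3) ((c div (n3*n4)) mod n2) (c mod n4)"

lemma swap_mid_carrier: "swap_mid n1 n2 n3 n4 \<in> carrier_mat (n1*n2*n3*n4) (n1*n2*n3*n4)"
  by (simp add: swap_mid_def)

lemma index_swap_mid:
  "r < n1*n2*n3*n4 \<Longrightarrow> c < n1*n2*n3*n4 \<Longrightarrow>
   swap_mid n1 n2 n3 n4 $$ (r,c) = (if r = swap_mid_index n2 n3 n4 c then 1 else 0)"
  by (simp add: swap_mid_def swap_mid_index_def kron_index4_def Let_def)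

lemma swap_mid_index_less:
  assumes "c < n1*n2*n3*n4"
  shows "swap_mid_index n2 n3 n4 c < n1*n2*n3*n4"
proof -
  have "n2 > 0" "n3 > 0" "n4 > 0" using assms by (auto intro!: gr0I)
  moreover have "c div (n2*n3*n4) < n1"
    using assms by (intro less_mult_imp_div_less) (simp add: mult_ac)
  ultimately have "swap_mid_index n2 n3 n4 c < n1*n3*n2*n4"
    unfolding swap_mid_index_def by (intro kron_index4_less) auto
  then show ?thesis by (simp add: mult_ac)
qed

lemma swap_mid_index_kron_index4:
  assumes "j < n2" "k < n3" "l < n4"
  shows "swap_mid_index n2 n3 n4 (kron_index4 n2 n3 n4 i j k l) = kron_index4 n3 n2 n4 i k j l"
proof -
  let ?c = "kron_index4 n2 n3 n4 i j k l"
  have "?c = i*(n2*n3*n4) + ((j*n3 + k)*n4 + l)"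
    by (simp add: kron_index4_def algebra_simps)
  then have 1: "?c div (n2*n3*n4) = i"
    using assms by (simp only: pair_index_div pair_index_less)
  have "?c div (n3*n4) = i*n2 + j"
    using assms unfolding kron_index4_split by (simp only: pair_index_div pair_index_less)
  then have 2: "(?c div (n3*n4)) mod n2 = j" using assms by simp
  have 3: "(?c div n4) mod n3 = k" "?c mod n4 = l" using assms by (simp_all add: kron_index4_def)
  show ?thesis unfolding swap_mid_index_def 1 2 3 ..
qed

lemma vac_ext_carrier:
  "V \<in> carrier_mat (d*e) (d*e) \<Longrightarrow> vac_ext d e V \<in> carrier_mat ((d+1)*e) ((d+1)*e)"
  unfolding vac_ext_def by (auto simp: algebra_simps)

lemma index_vac_ext:
  assumes V: "V \<in> carrier_mat (d*e) (d*e)" and "a \<le> d" "a' \<le> d" "k < e" "k' < e"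
  shows "vac_ext d e V $$ (a*e + k, a'*e + k') =
    (if a < d \<and> a' < d then V $$ (a*e + k, a'*e + k') else if a = d \<and> a' = d \<and> k = k' then 1 else 0)"
proof -
  have less: "x*e + y < d*e \<longleftrightarrow> x < d" if "x \<le> d" "y < e" for x y
    using that pair_index_less[of x d y e] by (cases "x = d") auto
  have "a*e + k < d*e + e" "a'*e + k' < d*e + e"
    using assms pair_index_less[of a "d+1" k e] pair_index_less[of a' "d+1" k' e] by auto
  then show ?thesis
    using assms less[of a k] less[of a' k'] by (cases "a = d"; cases "a' = d") (auto simp: vac_ext_def)
qed

lemma VW_op_carrier: "VW_op d e f V W \<in> carrier_mat ((d+1)*(d+1)*e*f) ((d+1)*(d+1)*e*f)"
  using swap_mid_carrier[of "d+1" "d+1" e f] by (auto simp: VW_op_def Let_def)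

lemma index_VW_op:
  assumes V: "V \<in> carrier_mat (d*e) (d*e)" and W: "W \<in> carrier_mat (d*f) (d*f)"
    and "a \<le> d" "b \<le> d" "k < e" "l < f" "a' \<le> d" "b' \<le> d" "k' < e" "l' < f"
  shows "VW_op d e f V W $$ (kron_index4 (d+1) e f a b k l, kron_index4 (d+1) e f a' b' k' l')
       = vac_ext d e V $$ (a*e + k, a'*e + k') * vac_ext d f W $$ (b*f + l, b'*f + l')"
proof -
  let ?n = "(d+1)*(d+1)*e*f"
  let ?K = "kron (vac_ext d e V) (vac_ext d f W)"
  have "(d+1)*e*((d+1)*f) = ?n" by (simp only: ac_simps)
  then have K: "?K \<in> carrier_mat ?n ?n"
    using kron_carrier_mat[OF vac_ext_carrier[OF V] vac_ext_carrier[OF W]] by simp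
  have "VW_op d e f V W $$ (kron_index4 (d+1) e f a b k l, kron_index4 (d+1) e f a' b' k' l')
      = ?K $$ (swap_mid_index (d+1) e f (kron_index4 (d+1) e f a b k l),
               swap_mid_index (d+1) e f (kron_index4 (d+1) e f a' b' k' l'))"
    unfolding VW_op_def Let_def using assms
    by (intro index_perm_conjugate[OF swap_mid_carrier K swap_mid_index_less index_swap_mid]
        kron_index4_less) auto
  also have "\<dots> = ?K $$ ((a*e + k)*((d+1)*f) + (b*f + l), (a'*e + k')*((d+1)*f) + (b'*f + l'))"
    using assms by (subst (1 2) swap_mid_index_kron_index4) (auto simp: kron_index4_split)
  also have "\<dots> = vac_ext d e V $$ (a*e + k, a'*e + k') * vac_ext d f W $$ (b*f + l, b'*f + l')"
    using assms
    by (intro index_kron_pair[OF vac_ext_carrier[OF V] vac_ext_carrier[OF W]] pair_index_less) auto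
  finally show ?thesis .
qed

lemma sum_VW_op_row_vac_B:
  fixes h :: "nat \<Rightarrow> complex"
  assumes V: "V \<in> carrier_mat (d*e) (d*e)" and W: "W \<in> carrier_mat (d*f) (d*f)"
    and "i < d" "k < e" "l < f"
  shows "(\<Sum>p<(d+1)*(d+1)*e*f. VW_op d e f V W $$ (kron_index4 (d+1) e f i d k l, p) * h p)
       = (\<Sum>a<d. \<Sum>k'<e. V $$ (i*e + k, a*e + k') * h (kron_index4 (d+1) e f a d k' l))"
proof -
  have row: "VW_op d e f V W $$ (kron_index4 (d+1) e f i d k l, kron_index4 (d+1) e f a b k' l')
      = (if a < d \<and> b = d \<and> l' = l then V $$ (i*e + k, a*e + k') else 0)"
    if "a < d+1" "b < d+1" "k' < e" "l' < f" for a b k' l'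
    using that assms index_VW_op[OF V W, of i d k l a b k' l'] by (auto simp: index_vac_ext)
  have "(\<Sum>p<(d+1)*(d+1)*e*f. VW_op d e f V W $$ (kron_index4 (d+1) e f i d k l, p) * h p)
      = (\<Sum>a<d+1. \<Sum>b<d+1. \<Sum>k'<e. \<Sum>l'<f.
           (if a < d \<and> b = d \<and> l' = l then V $$ (i*e + k, a*e + k') else 0)
           * h (kron_index4 (d+1) e f a b k' l'))"
    unfolding sum_kron_index4 by (intro sum.cong refl) (use row in simp)
  also have "\<dots> = (\<Sum>a<d. \<Sum>k'<e. V $$ (i*e + k, a*e + k') * h (kron_index4 (d+1) e f a d k' l))"
    using assms by (simp add: if_distrib[of "\<lambda>u. u * _"] cong: if_cong)
  finally show ?thesis .
qed

lemma sum_VW_op_row_vac_A: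
  fixes h :: "nat \<Rightarrow> complex"
  assumes V: "V \<in> carrier_mat (d*e) (d*e)" and W: "W \<in> carrier_mat (d*f) (d*f)"
    and "j < d" "k < e" "l < f"
  shows "(\<Sum>q<(d+1)*(d+1)*e*f. h q * cnj (VW_op d e f V W $$ (kron_index4 (d+1) e f d j k l, q)))
       = (\<Sum>b<d. \<Sum>l'<f. h (kron_index4 (d+1) e f d b k l') * cnj (W $$ (j*f + l, b*f + l')))"
proof -
  have row: "VW_op d e f V W $$ (kron_index4 (d+1) e f d j k l, kron_index4 (d+1) e f a b k' l')
      = (if a = d \<and> k' = k \<and> b < d then W $$ (j*f + l, b*f + l') else 0)"
    if "a < d+1" "b < d+1" "k' < e" "l' < f" for a b k' l'
    using that assms index_VW_op[OF V W, of d j k l a b k' l'] by (auto simp: index_vac_ext)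
  have "(\<Sum>q<(d+1)*(d+1)*e*f. h q * cnj (VW_op d e f V W $$ (kron_index4 (d+1) e f d j k l, q)))
      = (\<Sum>a<d+1. \<Sum>b<d+1. \<Sum>k'<e. \<Sum>l'<f. h (kron_index4 (d+1) e f a b k' l')
           * cnj (if a = d \<and> k' = k \<and> b < d then W $$ (j*f + l, b*f + l') else 0))"
    unfolding sum_kron_index4 by (intro sum.cong refl) (use row in simp)
  also have "\<dots> = (\<Sum>b<d. \<Sum>l'<f. h (kron_index4 (d+1) e f d b k l') * cnj (W $$ (j*f + l, b*f + l')))"
    using assms by (simp add: if_distrib[of cnj] if_distrib[of "\<lambda>u. _ * u"] sum_if_zero cong: if_cong)
  finally show ?thesis .
qed

lemma index_VW_op_conjugate:
  assumes V: "V \<in> carrier_mat (d*e) (d*e)" and W: "W \<in> carrier_mat (d*f) (d*f)"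
    and N: "N \<in> carrier_mat ((d+1)*(d+1)) ((d+1)*(d+1))" and \<sigma>: "\<sigma> \<in> carrier_mat (e*f) (e*f)"
    and i: "i < d" and j: "j < d" and k: "k < e" and l: "l < f"
  shows "(VW_op d e f V W * kron N \<sigma> * adj (VW_op d e f V W))
           $$ (kron_index4 (d+1) e f i d k l, kron_index4 (d+1) e f d j k l)
    = (\<Sum>a<d. \<Sum>k'<e. V $$ (i*e + k, a*e + k') * (\<Sum>b<d. \<Sum>l'<f.
         N $$ (a*(d+1) + d, d*(d+1) + b) * \<sigma> $$ (k'*f + l, k*f + l') * cnj (W $$ (j*f + l, b*f + l'))))"
proof -
  let ?n = "(d+1)*(d+1)*e*f"
  let ?T = "VW_op d e f V W"
  have M: "kron N \<sigma> \<in> carrier_mat ?n ?n"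
    using kron_carrier_mat[OF N \<sigma>] by (simp only: mult.assoc)
  have M_entry: "kron N \<sigma> $$ (kron_index4 (d+1) e f a d k' l, kron_index4 (d+1) e f d b k l')
      = N $$ (a*(d+1) + d, d*(d+1) + b) * \<sigma> $$ (k'*f + l, k*f + l')"
    if "a < d" "k' < e" "b < d" "l' < f" for a k' b l'
    unfolding kron_index4_split using that k l by (intro index_kron_pair[OF N \<sigma>] pair_index_less) auto
  have "(?T * kron N \<sigma> * adj ?T) $$ (kron_index4 (d+1) e f i d k l, kron_index4 (d+1) e f d j k l)
      = (\<Sum>p<?n. ?T $$ (kron_index4 (d+1) e f i d k l, p)
           * (\<Sum>q<?n. kron N \<sigma> $$ (p,q) * cnj (?T $$ (kron_index4 (d+1) e f d j k l, q))))"
    using i j k l by (intro index_mult_mult_adj[OF VW_op_carrier M] kron_index4_less) auto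
  also have "\<dots> = (\<Sum>a<d. \<Sum>k'<e. V $$ (i*e + k, a*e + k') * (\<Sum>b<d. \<Sum>l'<f.
      kron N \<sigma> $$ (kron_index4 (d+1) e f a d k' l, kron_index4 (d+1) e f d b k l') * cnj (W $$ (j*f + l, b*f + l'))))"
    by (simp only: sum_VW_op_row_vac_B[OF V W i k l] sum_VW_op_row_vac_A[OF V W j k l])
  also have "\<dots> = (\<Sum>a<d. \<Sum>k'<e. V $$ (i*e + k, a*e + k') * (\<Sum>b<d. \<Sum>l'<f.
      N $$ (a*(d+1) + d, d*(d+1) + b) * \<sigma> $$ (k'*f + l, k*f + l') * cnj (W $$ (j*f + l, b*f + l'))))"
    by (intro sum.cong refl) (use M_entry in simp)
  finally show ?thesis .
qed

section \<open>The coherence entry of the local model\<close>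

definition Umat_index :: "nat \<Rightarrow> nat \<Rightarrow> nat" where
  "Umat_index d c = (if c mod 2 = 0 then (c div 2)*(d+1) + d else d*(d+1) + c div 2)"

lemma Umat_carrier: "Umat d \<in> carrier_mat ((d+1)*(d+1)) (d*2)"
  by (simp add: Umat_def)

lemma Umat_index_less:
  assumes "c < d*2"
  shows "Umat_index d c < (d+1)*(d+1)"
proof -
  have "c div 2 < d" using assms by (simp add: less_mult_imp_div_less)
  then show ?thesis
    using pair_index_less[of "c div 2" "d+1" d "d+1"] pair_index_less[of d "d+1" "c div 2" "d+1"]
    by (simp add: Umat_index_def)
qed

lemma Umat_index_basis: "Umat_index d (i*2) = i*(d+1) + d" "Umat_index d (j*2+1) = d*(d+1) + j"
proof -
  have "(j*2+1) mod 2 = 1" "(j*2+1) div 2 = j" by presburger+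
  then show "Umat_index d (i*2) = i*(d+1) + d" "Umat_index d (j*2+1) = d*(d+1) + j"
    by (simp_all add: Umat_index_def)
qed

lemma index_Umat:
  "r < (d+1)*(d+1) \<Longrightarrow> c < d*2 \<Longrightarrow> Umat d $$ (r,c) = (if r = Umat_index d c then 1 else 0)"
  unfolding Umat_def Umat_index_def by (auto split: if_splits)

lemma inj_on_Umat_index: "inj_on (Umat_index d) {..<d*2}"
proof (rule inj_onI)
  fix c c' assume c: "c \<in> {..<d*2}" and c': "c' \<in> {..<d*2}" and eq: "Umat_index d c = Umat_index d c'"
  have low: "(x div 2)*(d+1) + d < d*(d+1)" if "x < d*2" for x
    using that pair_index_less[of "x div 2" d d "d+1"] by (simp add: less_mult_imp_div_less)
  have "c mod 2 = c' mod 2"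
    using eq low[of c] low[of c'] c c' unfolding Umat_index_def by (auto split: if_splits)
  moreover have "c div 2 = c' div 2"
    using eq \<open>c mod 2 = c' mod 2\<close> mult_right_cancel[of "d+1" "c div 2" "c' div 2"]
    unfolding Umat_index_def by (auto split: if_splits)
  ultimately show "c = c'" by (metis div_mult_mod_eq)
qed

lemma index_adj_Umat_conjugate:
  assumes Z: "Z \<in> carrier_mat ((d+1)*(d+1)) ((d+1)*(d+1))" and "i < d" "j < d"
  shows "(adj (Umat d) * Z * Umat d) $$ (i*2, j*2+1) = Z $$ (i*(d+1) + d, d*(d+1) + j)"
proof -
  have "(adj (Umat d) * Z * Umat d) $$ (i*2, j*2+1) = Z $$ (Umat_index d (i*2), Umat_index d (j*2+1))"
    using assms by (intro index_perm_conjugate[OF Umat_carrier Z Umat_index_less index_Umat]) auto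
  then show ?thesis by (simp only: Umat_index_basis)
qed

lemma index_Umat_conjugate_kron:
  assumes \<rho>: "\<rho> \<in> carrier_mat d d" and \<omega>: "\<omega> \<in> carrier_mat 2 2" and "a < d" "b < d"
  shows "(Umat d * kron \<rho> \<omega> * adj (Umat d)) $$ (a*(d+1) + d, d*(d+1) + b) = \<rho> $$ (a,b) * \<omega> $$ (0,1)"
proof -
  have "(Umat d * kron \<rho> \<omega> * adj (Umat d)) $$ (Umat_index d (a*2), Umat_index d (b*2 + 1))
      = kron \<rho> \<omega> $$ (a*2, b*2 + 1)"
    using assms by (intro index_embedding_conjugate[OF Umat_carrier kron_carrier_mat[OF \<rho> \<omega>]
        Umat_index_less inj_on_Umat_index index_Umat]) auto
  also have "\<dots> = \<rho> $$ (a,b) * \<omega> $$ (0,1)"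
    using index_kron_pair[OF \<rho> \<omega>, of a b 0 1] assms by simp
  finally show ?thesis by (simp only: Umat_index_basis)
qed

lemma ptrace2_carrier: "ptrace2 n1 n2 X \<in> carrier_mat n1 n1"
  by (simp add: ptrace2_def)

lemma index_ptrace2:
  "r < n1 \<Longrightarrow> r' < n1 \<Longrightarrow> ptrace2 n1 n2 X $$ (r,r') = (\<Sum>k<n2. X $$ (r*n2 + k, r'*n2 + k))"
  by (simp add: ptrace2_def)

definition local_model_channel ::
  "nat \<Rightarrow> nat \<Rightarrow> nat \<Rightarrow> complex mat \<Rightarrow> complex mat \<Rightarrow> complex mat \<Rightarrow> complex mat \<Rightarrow> complex mat" where
  "local_model_channel d e f V W \<sigma> X =
     adj (Umat d) * ptrace2 ((d+1)*(d+1)) (e*f)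
       (let T = VW_op d e f V W in T * kron (Umat d * X * adj (Umat d)) \<sigma> * adj T)
     * Umat d"

lemma index_local_model_channel:
  assumes V: "V \<in> carrier_mat (d*e) (d*e)" and W: "W \<in> carrier_mat (d*f) (d*f)"
    and \<sigma>: "\<sigma> \<in> carrier_mat (e*f) (e*f)" and \<rho>: "\<rho> \<in> carrier_mat d d" and \<omega>: "\<omega> \<in> carrier_mat 2 2"
    and i: "i < d" and j: "j < d"
  shows "local_model_channel d e f V W \<sigma> (kron \<rho> \<omega>) $$ (i*2, j*2+1)
    = (\<Sum>k<e. \<Sum>l<f. \<Sum>a<d. \<Sum>k'<e. V $$ (i*e + k, a*e + k') * (\<Sum>b<d. \<Sum>l'<f.
         \<rho> $$ (a,b) * \<omega> $$ (0,1) * \<sigma> $$ (k'*f + l, k*f + l') * cnj (W $$ (j*f + l, b*f + l'))))"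
proof -
  let ?N = "Umat d * kron \<rho> \<omega> * adj (Umat d)"
  let ?T = "VW_op d e f V W"
  let ?Y = "?T * kron ?N \<sigma> * adj ?T"
  have N: "?N \<in> carrier_mat ((d+1)*(d+1)) ((d+1)*(d+1))"
    by (rule mult_carrier_mat[OF mult_carrier_mat[OF Umat_carrier kron_carrier_mat[OF \<rho> \<omega>]]
        adj_carrier_mat[OF Umat_carrier]])
  have rows: "i*(d+1) + d < (d+1)*(d+1)" "d*(d+1) + j < (d+1)*(d+1)"
    using i j pair_index_less[of i "d+1" d "d+1"] pair_index_less[of d "d+1" j "d+1"] by auto
  have "local_model_channel d e f V W \<sigma> (kron \<rho> \<omega>) $$ (i*2, j*2+1)
      = ptrace2 ((d+1)*(d+1)) (e*f) ?Y $$ (i*(d+1) + d, d*(d+1) + j)"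
    unfolding local_model_channel_def Let_def by (intro index_adj_Umat_conjugate ptrace2_carrier i j)
  also have "\<dots> = (\<Sum>m<e*f. ?Y $$ ((i*(d+1) + d)*(e*f) + m, (d*(d+1) + j)*(e*f) + m))"
    by (rule index_ptrace2[OF rows])
  also have "\<dots> = (\<Sum>k<e. \<Sum>l<f. ?Y $$ (kron_index4 (d+1) e f i d k l, kron_index4 (d+1) e f d j k l))"
    by (simp only: sum_lessThan_mult kron_index4_split)
  also have "\<dots> = (\<Sum>k<e. \<Sum>l<f. \<Sum>a<d. \<Sum>k'<e. V $$ (i*e + k, a*e + k') * (\<Sum>b<d. \<Sum>l'<f.
         ?N $$ (a*(d+1) + d, d*(d+1) + b) * \<sigma> $$ (k'*f + l, k*f + l') * cnj (W $$ (j*f + l, b*f + l'))))"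
    by (intro sum.cong refl index_VW_op_conjugate[OF V W N \<sigma> i j]) auto
  also have "\<dots> = (\<Sum>k<e. \<Sum>l<f. \<Sum>a<d. \<Sum>k'<e. V $$ (i*e + k, a*e + k') * (\<Sum>b<d. \<Sum>l'<f.
         \<rho> $$ (a,b) * \<omega> $$ (0,1) * \<sigma> $$ (k'*f + l, k*f + l') * cnj (W $$ (j*f + l, b*f + l'))))"
    by (intro sum.cong refl) (use index_Umat_conjugate_kron[OF \<rho> \<omega>] in simp)
  finally show ?thesis .
qed

lemma index_chanC_kron:
  assumes \<psi>: "\<psi> \<in> carrier_vec d" and \<rho>: "\<rho> \<in> carrier_mat d d" and \<omega>: "\<omega> \<in> carrier_mat 2 2"
    and "i < d" "j < d"
  shows "chanC d \<psi> (kron \<rho> \<omega>) $$ (i*2, j*2+1) = \<psi> $ i * cnj (\<psi> $ j) * (tr \<rho> * \<omega> $$ (0,1))"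
proof -
  have "chanC d \<psi> (kron \<rho> \<omega>) $$ (i*2 + 0, j*2 + 1) = ketbra \<psi> $$ (i,j) * ptrace1 d 2 (kron \<rho> \<omega>) $$ (0,1)"
    unfolding chanC_def using assms
    by (intro index_kron_pair[of "ketbra \<psi>" d d _ 2 2]) (auto simp: ketbra_def ptrace1_def)
  also have "ptrace1 d 2 (kron \<rho> \<omega>) $$ (0,1) = (\<Sum>k<d. kron \<rho> \<omega> $$ (k*2 + 0, k*2 + 1))"
    by (simp add: ptrace1_def)
  also have "\<dots> = (\<Sum>k<d. \<rho> $$ (k,k) * \<omega> $$ (0,1))"
    by (intro sum.cong refl index_kron_pair[OF \<rho> \<omega>]) auto
  also have "\<dots> = tr \<rho> * \<omega> $$ (0,1)"
    using \<rho> by (simp add: tr_def sum_distrib_right)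
  finally show ?thesis using assms by (simp add: ketbra_def)
qed

lemma density_ketbra:
  assumes v: "v \<in> carrier_vec n" and unit: "cinner v v = 1"
  shows "density n (ketbra v)"
proof -
  have K: "ketbra v \<in> carrier_mat n n" using v by (simp add: ketbra_def)
  have quad: "cinner w (ketbra v *\<^sub>v w) = cnj (cinner v w) * cinner v w" if w: "w \<in> carrier_vec n" for w
  proof -
    have "(ketbra v *\<^sub>v w) $ i = v $ i * cinner v w" if "i < n" for i
      using that v w
      by (simp add: ketbra_def cinner_def scalar_prod_def sum_distrib_left lessThan_atLeast0 mult_ac)
    then have "cinner w (ketbra v *\<^sub>v w) = (\<Sum>i<n. cnj (w $ i) * v $ i) * cinner v w"
      using w by (simp add: cinner_def sum_distrib_right mult.assoc)
    also have "(\<Sum>i<n. cnj (w $ i) * v $ i) = cnj (cinner v w)"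
      using v by (simp add: cinner_def mult.commute)
    finally show ?thesis .
  qed
  have nonneg: "Im (cnj z * z) = 0 \<and> 0 \<le> Re (cnj z * z)" for z :: complex
    by (simp add: algebra_simps)
  have "tr (ketbra v) = cinner v v"
    using v by (simp add: tr_def ketbra_def cinner_def mult.commute)
  then show ?thesis
    using K quad unit nonneg by (simp add: density_def positive_semidef_def)
qed

definition basis_state :: "nat \<Rightarrow> nat \<Rightarrow> complex mat" where
  "basis_state d a = ketbra (unit_vec d a)"

definition plus_state :: "complex mat" where
  "plus_state = ketbra (vec 2 (\<lambda>_. complex_of_real (sqrt (1/2))))"

lemma density_basis_state: "a < d \<Longrightarrow> density d (basis_state d a)"
  unfolding basis_state_def
  by (rule density_ketbra) (auto simp: cinner_def if_distrib[of cnj] if_distrib[of "\<lambda>u. u * _"] cong: if_cong)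

lemma index_basis_state:
  "x < d \<Longrightarrow> y < d \<Longrightarrow> basis_state d a $$ (x,y) = (if x = a then if y = a then 1 else 0 else 0)"
  by (simp add: basis_state_def ketbra_def unit_vec_def)

lemma sqrt_half_square: "complex_of_real (sqrt (1/2)) * complex_of_real (sqrt (1/2)) = 1/2"
  by (simp flip: of_real_mult)

lemma density_plus_state: "density 2 plus_state"
  unfolding plus_state_def
  by (intro density_ketbra) (simp_all add: cinner_def numeral_2_eq_2 sqrt_half_square)

lemma plus_state_coherence: "plus_state $$ (0,1) = 1/2"
  by (simp add: plus_state_def ketbra_def sqrt_half_square)

section \<open>Positive forms and Parseval frames\<close>

definition sesq_form :: "nat \<Rightarrow> complex mat \<Rightarrow> (nat \<Rightarrow> complex) \<Rightarrow> (nat \<Rightarrow> complex) \<Rightarrow> complex" where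
  "sesq_form n \<sigma> g h = (\<Sum>s<n. \<Sum>t<n. cnj (g s) * \<sigma> $$ (s,t) * h t)"

lemma sesq_form_psd:
  assumes "positive_semidef n \<sigma>"
  shows "Im (sesq_form n \<sigma> g g) = 0" "0 \<le> Re (sesq_form n \<sigma> g g)"
proof -
  have \<sigma>: "\<sigma> \<in> carrier_mat n n" using assms by (simp add: positive_semidef_def)
  have "cinner (vec n g) (\<sigma> *\<^sub>v vec n g) = (\<Sum>s<n. cnj (g s) * (\<Sum>t<n. \<sigma> $$ (s,t) * g t))"
    unfolding cinner_def using \<sigma>
    by (intro sum.cong refl) (auto simp: scalar_prod_def lessThan_atLeast0 intro!: sum.cong)
  also have "\<dots> = sesq_form n \<sigma> g g"
    unfolding sesq_form_def by (simp add: sum_distrib_left mult.assoc)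
  finally show "Im (sesq_form n \<sigma> g g) = 0" "0 \<le> Re (sesq_form n \<sigma> g g)"
    using assms unfolding positive_semidef_def by (metis vec_carrier)+
qed

lemma sesq_form_expand:
  "sesq_form n \<sigma> (\<lambda>s. g s + c * h s) (\<lambda>s. g s + c * h s)
   = sesq_form n \<sigma> g g + c * sesq_form n \<sigma> g h + cnj c * sesq_form n \<sigma> h g
     + cnj c * c * sesq_form n \<sigma> h h"
  unfolding sesq_form_def by (simp add: algebra_simps sum.distrib sum_distrib_left)

lemma sesq_form_cross_le:
  assumes "positive_semidef n \<sigma>"
  shows "2 * Re (sesq_form n \<sigma> h g) \<le> Re (sesq_form n \<sigma> g g) + Re (sesq_form n \<sigma> h h)"
proof -
  have "0 \<le> Re (sesq_form n \<sigma> (\<lambda>s. g s + (-1) * h s) (\<lambda>s. g s + (-1) * h s))"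
    by (rule sesq_form_psd(2)[OF assms])
  then have minus: "0 \<le> Re (sesq_form n \<sigma> g g) - Re (sesq_form n \<sigma> g h)
      - Re (sesq_form n \<sigma> h g) + Re (sesq_form n \<sigma> h h)"
    unfolding sesq_form_expand by simp
  have "0 = Im (sesq_form n \<sigma> (\<lambda>s. g s + \<i> * h s) (\<lambda>s. g s + \<i> * h s))"
    by (rule sesq_form_psd(1)[OF assms, symmetric])
  then have "Re (sesq_form n \<sigma> g h) = Re (sesq_form n \<sigma> h g)"
    unfolding sesq_form_expand using sesq_form_psd(1)[OF assms] by simp
  with minus show ?thesis by simp
qed

lemma sum_sesq_form_parseval:
  assumes \<sigma>: "\<sigma> \<in> carrier_mat n n"
    and parseval: "\<And>s t. s < n \<Longrightarrow> t < n \<Longrightarrow> (\<Sum>j\<in>J. cnj (x j s) * x j t) = (if s = t then 1 else 0)"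
  shows "(\<Sum>j\<in>J. sesq_form n \<sigma> (x j) (x j)) = tr \<sigma>"
proof -
  have "(\<Sum>j\<in>J. sesq_form n \<sigma> (x j) (x j))
      = (\<Sum>s<n. \<Sum>t<n. \<sigma> $$ (s,t) * (\<Sum>j\<in>J. cnj (x j s) * x j t))"
    unfolding sesq_form_def by (simp add: sum.swap[where A = J] sum_distrib_left mult_ac)
  also have "\<dots> = (\<Sum>s<n. \<Sum>t<n. \<sigma> $$ (s,t) * (if s = t then 1 else 0))"
    by (intro sum.cong refl) (simp add: parseval)
  also have "\<dots> = tr \<sigma>"
    using \<sigma> by (simp add: tr_def if_distrib[of "\<lambda>u. _ * u"] cong: if_cong)
  finally show ?thesis .
qed

lemma Re_sum_sesq_form_le_trace:
  assumes \<sigma>: "positive_semidef n \<sigma>"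
    and x: "\<And>s t. s < n \<Longrightarrow> t < n \<Longrightarrow> (\<Sum>j\<in>J. cnj (x j s) * x j t) = (if s = t then 1 else 0)"
    and y: "\<And>s t. s < n \<Longrightarrow> t < n \<Longrightarrow> (\<Sum>j\<in>J. cnj (y j s) * y j t) = (if s = t then 1 else 0)"
  shows "Re (\<Sum>j\<in>J. sesq_form n \<sigma> (y j) (x j)) \<le> Re (tr \<sigma>)"
proof -
  have \<sigma>_carrier: "\<sigma> \<in> carrier_mat n n" using \<sigma> by (simp add: positive_semidef_def)
  have "2 * Re (\<Sum>j\<in>J. sesq_form n \<sigma> (y j) (x j))
      \<le> (\<Sum>j\<in>J. Re (sesq_form n \<sigma> (x j) (x j)) + Re (sesq_form n \<sigma> (y j) (y j)))"
    unfolding Re_sum sum_distrib_left by (intro sum_mono sesq_form_cross_le[OF \<sigma>])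
  also have "\<dots> = 2 * Re (tr \<sigma>)"
    using sum_sesq_form_parseval[OF \<sigma>_carrier x] sum_sesq_form_parseval[OF \<sigma>_carrier y]
    by (simp add: sum.distrib flip: Re_sum)
  finally show ?thesis by simp
qed

section \<open>The frames built from V and W\<close>

(* (<psi| (x) I_E) V for V acting on C^d (x) C^e; its a-th column block is X_a. *)
definition partial_bra :: "nat \<Rightarrow> nat \<Rightarrow> complex vec \<Rightarrow> complex mat \<Rightarrow> complex mat" where
  "partial_bra d e \<psi> V = mat e (d*e) (\<lambda>(k,p). \<Sum>i<d. cnj (\<psi> $ i) * V $$ (i*e + k, p))"

lemma unitary_rows_orthonormal:
  assumes "unitary_mat n V" "r < n" "r' < n"
  shows "(\<Sum>p<n. V $$ (r,p) * cnj (V $$ (r',p))) = (if r = r' then 1 else 0)"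
proof -
  have V: "V \<in> carrier_mat n n" and "V * adj V = 1\<^sub>m n" using assms(1) by (auto simp: unitary_mat_def)
  then have "(V * adj V) $$ (r,r') = (if r = r' then 1 else 0)" using assms by simp
  moreover have "(V * adj V) $$ (r,r') = (\<Sum>p<n. V $$ (r,p) * cnj (V $$ (r',p)))"
    using V assms by (subst index_mult_mat_sum) (auto intro!: sum.cong)
  ultimately show ?thesis by simp
qed

lemma partial_bra_rows_orthonormal:
  assumes V: "unitary_mat (d*e) V" and \<psi>: "\<psi> \<in> carrier_vec d" "cinner \<psi> \<psi> = 1"
    and "k1 < e" "k2 < e"
  shows "(\<Sum>p<d*e. partial_bra d e \<psi> V $$ (k1,p) * cnj (partial_bra d e \<psi> V $$ (k2,p)))
       = (if k1 = k2 then 1 else 0)"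
proof -
  have "(\<Sum>p<d*e. partial_bra d e \<psi> V $$ (k1,p) * cnj (partial_bra d e \<psi> V $$ (k2,p)))
      = (\<Sum>i<d. \<Sum>i'<d. cnj (\<psi> $ i) * \<psi> $ i' * (\<Sum>p<d*e. V $$ (i*e + k1, p) * cnj (V $$ (i'*e + k2, p))))"
    using assms by (simp add: partial_bra_def sum_distrib_left sum_distrib_right
        sum.swap[where A = "{..<d*e}" and B = "{..<d}"] mult_ac)
  also have "\<dots> = (\<Sum>i<d. \<Sum>i'<d. cnj (\<psi> $ i) * \<psi> $ i' * (if i = i' \<and> k1 = k2 then 1 else 0))"
    using assms by (intro sum.cong refl) (simp add: unitary_rows_orthonormal pair_index_less pair_index_eq_iff)
  also have "\<dots> = (if k1 = k2 then cinner \<psi> \<psi> else 0)"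
    using \<psi> by (simp add: cinner_def if_distrib[of "\<lambda>u. _ * u"] sum_if_zero cong: if_cong)
  finally show ?thesis using \<psi> by simp
qed

(* E_vec (a,k,l) = X_a|k> (x) |l> and F_vec (a,k,l) = |k> (x) Y_a|l>, as functions on the
   basis indices of C^e (x) C^f. *)
definition E_vec ::
  "nat \<Rightarrow> nat \<Rightarrow> nat \<Rightarrow> complex vec \<Rightarrow> complex mat \<Rightarrow> nat \<times> nat \<times> nat \<Rightarrow> nat \<Rightarrow> complex" where
  "E_vec d e f \<psi> V = (\<lambda>(a,k,l) s. if s mod f = l then partial_bra d e \<psi> V $$ (s div f, a*e + k) else 0)"

definition F_vec ::
  "nat \<Rightarrow> nat \<Rightarrow> nat \<Rightarrow> complex vec \<Rightarrow> complex mat \<Rightarrow> nat \<times> nat \<times> nat \<Rightarrow> nat \<Rightarrow> complex" where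
  "F_vec d e f \<psi> W = (\<lambda>(a,k,l) s. if s div f = k then partial_bra d f \<psi> W $$ (s mod f, a*f + l) else 0)"

lemma E_vec_parseval:
  assumes V: "unitary_mat (d*e) V" and \<psi>: "\<psi> \<in> carrier_vec d" "cinner \<psi> \<psi> = 1"
    and s: "s < e*f" and t: "t < e*f"
  shows "(\<Sum>x\<in>{..<d}\<times>{..<e}\<times>{..<f}. cnj (E_vec d e f \<psi> V x s) * E_vec d e f \<psi> V x t)
       = (if s = t then 1 else 0)"
proof -
  let ?X = "partial_bra d e \<psi> V"
  have "s mod f < f" using s by (cases f) auto
  moreover have "s div f < e" "t div f < e" using s t by (simp_all add: less_mult_imp_div_less)
  moreover have "t mod f = s mod f \<and> t div f = s div f \<longleftrightarrow> s = t" by (metis div_mult_mod_eq)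
  moreover have "(\<Sum>x\<in>{..<d}\<times>{..<e}\<times>{..<f}. cnj (E_vec d e f \<psi> V x s) * E_vec d e f \<psi> V x t)
      = (if t mod f = s mod f then \<Sum>p<d*e. ?X $$ (t div f, p) * cnj (?X $$ (s div f, p)) else 0)"
    using \<open>s mod f < f\<close>
    by (simp add: sum_product_triple E_vec_def sum_lessThan_mult if_distrib[of cnj]
        if_distrib[of "\<lambda>u. u * _"] if_distrib[of "\<lambda>u. _ * u"] sum_if_zero mult.commute cong: if_cong)
  ultimately show ?thesis by (auto simp: partial_bra_rows_orthonormal[OF V \<psi>])
qed

lemma F_vec_parseval:
  assumes W: "unitary_mat (d*f) W" and \<psi>: "\<psi> \<in> carrier_vec d" "cinner \<psi> \<psi> = 1"
    and s: "s < e*f" and t: "t < e*f"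
  shows "(\<Sum>x\<in>{..<d}\<times>{..<e}\<times>{..<f}. cnj (F_vec d e f \<psi> W x s) * F_vec d e f \<psi> W x t)
       = (if s = t then 1 else 0)"
proof -
  let ?Y = "partial_bra d f \<psi> W"
  have "s mod f < f" "t mod f < f" using s t by (cases f; simp)+
  moreover have "s div f < e" using s by (simp add: less_mult_imp_div_less)
  moreover have "t div f = s div f \<and> t mod f = s mod f \<longleftrightarrow> s = t" by (metis div_mult_mod_eq)
  moreover have "(\<Sum>x\<in>{..<d}\<times>{..<e}\<times>{..<f}. cnj (F_vec d e f \<psi> W x s) * F_vec d e f \<psi> W x t)
      = (if t div f = s div f then \<Sum>p<d*f. ?Y $$ (t mod f, p) * cnj (?Y $$ (s mod f, p)) else 0)"
    using \<open>s div f < e\<close>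
    by (simp add: sum_product_triple F_vec_def sum_lessThan_mult if_distrib[of cnj]
        if_distrib[of "\<lambda>u. u * _"] if_distrib[of "\<lambda>u. _ * u"] sum_if_zero mult.commute cong: if_cong)
  ultimately show ?thesis by (auto simp: partial_bra_rows_orthonormal[OF W \<psi>])
qed

definition branch_coherence ::
  "nat \<Rightarrow> nat \<Rightarrow> complex mat \<Rightarrow> complex mat \<Rightarrow> complex mat \<Rightarrow> nat \<Rightarrow> nat \<Rightarrow> nat \<Rightarrow> complex" where
  "branch_coherence e f V W \<sigma> a i j = (\<Sum>k<e. \<Sum>l<f. \<Sum>k'<e. \<Sum>l'<f.
     V $$ (i*e + k, a*e + k') * \<sigma> $$ (k'*f + l, k*f + l') * cnj (W $$ (j*f + l, a*f + l')))"

lemma sum_reverse3: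
  "(\<Sum>a\<in>A. \<Sum>b\<in>B. \<Sum>c\<in>C. g a b c) = (\<Sum>c\<in>C. \<Sum>b\<in>B. \<Sum>a\<in>A. g a b c)"
proof -
  have "(\<Sum>a\<in>A. \<Sum>b\<in>B. \<Sum>c\<in>C. g a b c) = (\<Sum>a\<in>A. \<Sum>c\<in>C. \<Sum>b\<in>B. g a b c)"
    by (rule sum.cong[OF refl], rule sum.swap)
  also have "\<dots> = (\<Sum>c\<in>C. \<Sum>a\<in>A. \<Sum>b\<in>B. g a b c)" by (rule sum.swap)
  also have "\<dots> = (\<Sum>c\<in>C. \<Sum>b\<in>B. \<Sum>a\<in>A. g a b c)" by (rule sum.cong[OF refl], rule sum.swap)
  finally show ?thesis .
qed

lemma sum_sesq_form_F_vec_E_vec: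
  "(\<Sum>x\<in>{..<d}\<times>{..<e}\<times>{..<f}. sesq_form (e*f) \<sigma> (F_vec d e f \<psi> W x) (E_vec d e f \<psi> V x))
   = (\<Sum>a<d. \<Sum>i<d. \<Sum>j<d. cnj (\<psi> $ i) * \<psi> $ j * branch_coherence e f V W \<sigma> a i j)"
proof -
  let ?X = "partial_bra d e \<psi> V" and ?Y = "partial_bra d f \<psi> W"
  let ?G = "\<lambda>a k l k' l'. \<sigma> $$ (k'*f + l, k*f + l') * cnj (?Y $$ (l, a*f + l')) * ?X $$ (k, a*e + k')"
  have div_less: "s div f < e" if "s < e*f" for s using that by (simp add: less_mult_imp_div_less)
  have mod_less: "s mod f < f" if "s < e*f" for s using that by (cases f) auto
  have expand: "?G a k l k' l' = (\<Sum>i<d. \<Sum>j<d. cnj (\<psi> $ i) * \<psi> $ j *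
      (V $$ (i*e + k, a*e + k') * \<sigma> $$ (k'*f + l, k*f + l') * cnj (W $$ (j*f + l, a*f + l'))))"
    if "a < d" "k < e" "l < f" "k' < e" "l' < f" for a k l k' l'
  proof -
    have "?G a k l k' l' = (\<Sum>i<d. cnj (\<psi> $ i) * V $$ (i*e + k, a*e + k'))
        * (\<Sum>j<d. \<psi> $ j * cnj (W $$ (j*f + l, a*f + l'))) * \<sigma> $$ (k'*f + l, k*f + l')"
      using that by (simp add: partial_bra_def pair_index_less mult_ac)
    also have "\<dots> = (\<Sum>i<d. \<Sum>j<d. cnj (\<psi> $ i) * \<psi> $ j *
        (V $$ (i*e + k, a*e + k') * \<sigma> $$ (k'*f + l, k*f + l') * cnj (W $$ (j*f + l, a*f + l'))))"
      unfolding sum_distrib_left sum_distrib_right by (subst sum.swap) (simp add: mult_ac)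
    finally show ?thesis .
  qed
  have "(\<Sum>x\<in>{..<d}\<times>{..<e}\<times>{..<f}. sesq_form (e*f) \<sigma> (F_vec d e f \<psi> W x) (E_vec d e f \<psi> V x))
      = (\<Sum>a<d. \<Sum>s<e*f. \<Sum>t<e*f. \<sigma> $$ (s,t) * cnj (?Y $$ (s mod f, a*f + t mod f))
           * ?X $$ (t div f, a*e + s div f))"
    using div_less mod_less
    by (simp add: sum_product_triple sesq_form_def F_vec_def E_vec_def
        sum.swap[where A = "{..<e}" and B = "{..<e*f}"] sum.swap[where A = "{..<f}" and B = "{..<e*f}"]
        if_distrib[of cnj] if_distrib[of "\<lambda>u. u * _"] if_distrib[of "\<lambda>u. _ * u"] sum_if_zero
        mult_ac cong: if_cong)
  also have "\<dots> = (\<Sum>a<d. \<Sum>k'<e. \<Sum>l<f. \<Sum>k<e. \<Sum>l'<f. ?G a k l k' l')"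
    by (simp add: sum_lessThan_mult)
  also have "\<dots> = (\<Sum>a<d. \<Sum>k<e. \<Sum>l<f. \<Sum>k'<e. \<Sum>l'<f. ?G a k l k' l')"
    by (rule sum.cong[OF refl], rule sum_reverse3)
  also have "\<dots> = (\<Sum>a<d. \<Sum>k<e. \<Sum>l<f. \<Sum>k'<e. \<Sum>l'<f. \<Sum>i<d. \<Sum>j<d. cnj (\<psi> $ i) * \<psi> $ j *
      (V $$ (i*e + k, a*e + k') * \<sigma> $$ (k'*f + l, k*f + l') * cnj (W $$ (j*f + l, a*f + l'))))"
    by (intro sum.cong refl) (simp add: expand)
  also have "\<dots> = (\<Sum>a<d. \<Sum>i<d. \<Sum>j<d. \<Sum>k<e. \<Sum>l<f. \<Sum>k'<e. \<Sum>l'<f. cnj (\<psi> $ i) * \<psi> $ j *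
      (V $$ (i*e + k, a*e + k') * \<sigma> $$ (k'*f + l, k*f + l') * cnj (W $$ (j*f + l, a*f + l'))))"
    by (simp only: sum.swap[where A = "{..<e}" and B = "{..<d}"] sum.swap[where A = "{..<f}" and B = "{..<d}"])
  also have "\<dots> = (\<Sum>a<d. \<Sum>i<d. \<Sum>j<d. cnj (\<psi> $ i) * \<psi> $ j * branch_coherence e f V W \<sigma> a i j)"
    by (simp add: branch_coherence_def sum_distrib_left)
  finally show ?thesis .
qed

lemma local_model_channel_basis_plus:
  assumes V: "V \<in> carrier_mat (d*e) (d*e)" and W: "W \<in> carrier_mat (d*f) (d*f)"
    and \<sigma>: "\<sigma> \<in> carrier_mat (e*f) (e*f)" and "a < d" and i: "i < d" and j: "j < d"
  shows "local_model_channel d e f V W \<sigma> (kron (basis_state d a) plus_state) $$ (i*2, j*2+1)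
       = 1/2 * branch_coherence e f V W \<sigma> a i j"
proof -
  have \<rho>: "basis_state d a \<in> carrier_mat d d" by (simp add: basis_state_def ketbra_def)
  have \<omega>: "plus_state \<in> carrier_mat 2 2" by (simp add: plus_state_def ketbra_def)
  show ?thesis
    using \<open>a < d\<close> index_local_model_channel[OF V W \<sigma> \<rho> \<omega> i j, unfolded plus_state_coherence]
    by (simp add: index_basis_state
        branch_coherence_def if_distrib[of "\<lambda>u. u * _"] if_distrib[of "\<lambda>u. _ * u"] sum_if_zero
        sum_distrib_left mult_ac cong: if_cong)
qed

lemma branch_coherence_of_local_model:
  assumes V: "V \<in> carrier_mat (d*e) (d*e)" and W: "W \<in> carrier_mat (d*f) (d*f)"
    and \<sigma>: "\<sigma> \<in> carrier_mat (e*f) (e*f)" and \<psi>: "\<psi> \<in> carrier_vec d"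
    and a: "a < d" and i: "i < d" and j: "j < d"
    and model: "chanC d \<psi> (kron (basis_state d a) plus_state)
                = local_model_channel d e f V W \<sigma> (kron (basis_state d a) plus_state)"
  shows "branch_coherence e f V W \<sigma> a i j = \<psi> $ i * cnj (\<psi> $ j)"
proof -
  have \<rho>: "basis_state d a \<in> carrier_mat d d" by (simp add: basis_state_def ketbra_def)
  have \<omega>: "plus_state \<in> carrier_mat 2 2" by (simp add: plus_state_def ketbra_def)
  have "tr (basis_state d a) = 1" using density_basis_state[OF a] by (simp add: density_def)
  then have "1/2 * (\<psi> $ i * cnj (\<psi> $ j)) = chanC d \<psi> (kron (basis_state d a) plus_state) $$ (i*2, j*2+1)"
    using index_chanC_kron[OF \<psi> \<rho> \<omega> i j, unfolded plus_state_coherence] by simp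
  also have "\<dots> = 1/2 * branch_coherence e f V W \<sigma> a i j"
    using local_model_channel_basis_plus[OF V W \<sigma> a i j] by (simp add: model)
  finally show ?thesis by simp
qed

theorem proposition1:
  fixes d :: nat and \<psi>0 :: "complex vec"
  assumes "d \<ge> 2"
    and "\<psi>0 \<in> carrier_vec d" and "cinner \<psi>0 \<psi>0 = 1"
  shows "\<not> (\<exists>(e::nat) (f::nat) \<sigma> V W.
            density (e*f) \<sigma> \<and> unitary_mat (d*e) V \<and> unitary_mat (d*f) W \<and>
            (\<forall>\<rho> \<omega>. density d \<rho> \<longrightarrow> density 2 \<omega> \<longrightarrow>
               chanC d \<psi>0 (kron \<rho> \<omega>) =
               adj (Umat d) *
                 ptrace2 ((d+1)*(d+1)) (e*f)
                   (let T = VW_op d e f V W in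
                      T * kron (Umat d * kron \<rho> \<omega> * adj (Umat d)) \<sigma> * adj T)
               * Umat d))"
proof (unfold local_model_channel_def[symmetric], intro notI, elim exE conjE)
  fix e f \<sigma> V W
  assume \<sigma>: "density (e*f) \<sigma>" and V: "unitary_mat (d*e) V" and W: "unitary_mat (d*f) W"
    and model: "\<forall>\<rho> \<omega>. density d \<rho> \<longrightarrow> density 2 \<omega> \<longrightarrow>
                  chanC d \<psi>0 (kron \<rho> \<omega>) = local_model_channel d e f V W \<sigma> (kron \<rho> \<omega>)"
  have psd: "positive_semidef (e*f) \<sigma>" and "tr \<sigma> = 1" using \<sigma> by (simp_all add: density_def)
  have coherence: "branch_coherence e f V W \<sigma> a i j = \<psi>0 $ i * cnj (\<psi>0 $ j)"
    if "a < d" "i < d" "j < d" for a i j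
    using V W psd that assms(2) model[rule_format, OF density_basis_state[OF \<open>a < d\<close>] density_plus_state]
    by (intro branch_coherence_of_local_model) (auto simp: unitary_mat_def positive_semidef_def)
  have "(\<Sum>i<d. \<Sum>j<d. cnj (\<psi>0 $ i) * \<psi>0 $ j * (\<psi>0 $ i * cnj (\<psi>0 $ j)))
      = cinner \<psi>0 \<psi>0 * cinner \<psi>0 \<psi>0"
    using assms(2) by (simp add: cinner_def sum_product mult_ac)
  then have cross: "of_nat d = (\<Sum>x\<in>{..<d}\<times>{..<e}\<times>{..<f}.
      sesq_form (e*f) \<sigma> (F_vec d e f \<psi>0 W x) (E_vec d e f \<psi>0 V x))"
    using assms(3) by (simp add: sum_sesq_form_F_vec_E_vec coherence)
  have "real d \<le> Re (tr \<sigma>)"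
    using Re_sum_sesq_form_le_trace[OF psd E_vec_parseval[OF V assms(2,3)] F_vec_parseval[OF W assms(2,3)]]
    unfolding cross[symmetric] by simp
  with \<open>d \<ge> 2\<close> \<open>tr \<sigma> = 1\<close> show False by simp
qed

end
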